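(* Let $R$ be a unital $K$-algebra, $J$ a locally f.d.ss ideal of $R$, and $T$ a finite dimensional semisimple subalgebra of $R$ with identity element $p := 1_T$ such that $R = T \oplus J$ as $K$-vector spaces. Then the following are equivalent: (a) $R$ is locally f.d.ss; (b) $pRp$ is locally f.d.ss; (c) for every idempotent $f \in pJp$ there is an idempotent $e \in pJp$ such that $f \in eJe$ and $e$ commutes with every element of $T$.
   Context: $K$ is a field. All algebras are associative $K$-algebras; ideals are two-sided ring ideals that are also $K$-subspaces. A $K$-algebra $R$ is locally f.d.ss if every finite subset of $R$ is contained in a subalgebra of $R$ that is a finite dimensional semisimple $K$-algebra. The identity $1_T$ of $T$ need not equal $1_R$. *)

theory Defs
  imports Complex_Main
begin

definition K_algebra :: "('k::field \<Rightarrow> 'r::ring_1 \<Rightarrow> 'r) \<Rightarrow> bool" where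
  "K_algebra scale \<longleftrightarrow> vector_space scale \<and>
     (\<forall>c x y. scale c (x * y) = scale c x * y) \<and>
     (\<forall>c x y. scale c (x * y) = x * scale c y)"

text \<open>Subalgebra (not necessarily containing 1): a K-subspace closed under multiplication.\<close>
definition subalgebra :: "('k::field \<Rightarrow> 'r::ring_1 \<Rightarrow> 'r) \<Rightarrow> 'r set \<Rightarrow> bool" where
  "subalgebra scale S \<longleftrightarrow> module.subspace scale S \<and> (\<forall>x\<in>S. \<forall>y\<in>S. x * y \<in> S)"

definition alg_ideal :: "('k::field \<Rightarrow> 'r::ring_1 \<Rightarrow> 'r) \<Rightarrow> 'r set \<Rightarrow> bool" where
  "alg_ideal scale I \<longleftrightarrow> module.subspace scale I \<and> (\<forall>x\<in>I. \<forall>r. r * x \<in> I \<and> x * r \<in> I)"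

definition is_identity_of :: "'r::ring_1 set \<Rightarrow> 'r \<Rightarrow> bool" where
  "is_identity_of S e \<longleftrightarrow> e \<in> S \<and> (\<forall>x\<in>S. e * x = x \<and> x * e = x)"

definition fin_dim :: "('k::field \<Rightarrow> 'r::ring_1 \<Rightarrow> 'r) \<Rightarrow> 'r set \<Rightarrow> bool" where
  "fin_dim scale S \<longleftrightarrow> (\<exists>B. finite B \<and> S \<subseteq> module.span scale B)"

definition left_ideal_in :: "('k::field \<Rightarrow> 'r::ring_1 \<Rightarrow> 'r) \<Rightarrow> 'r set \<Rightarrow> 'r set \<Rightarrow> bool" where
  "left_ideal_in scale S L \<longleftrightarrow> module.subspace scale L \<and> L \<subseteq> S \<and> (\<forall>a\<in>S. \<forall>x\<in>L. a * x \<in> L)"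

text \<open>Semisimple algebra: unital (with its own identity) and semisimple as a left module over
  itself, i.e. every left ideal has a complementary left ideal.\<close>
definition semisimple_alg :: "('k::field \<Rightarrow> 'r::ring_1 \<Rightarrow> 'r) \<Rightarrow> 'r set \<Rightarrow> bool" where
  "semisimple_alg scale S \<longleftrightarrow> (\<exists>e. is_identity_of S e) \<and>
     (\<forall>L. left_ideal_in scale S L \<longrightarrow>
        (\<exists>L'. left_ideal_in scale S L' \<and> L \<inter> L' = {0} \<and> {x + y | x y. x \<in> L \<and> y \<in> L'} = S))"

definition fdss :: "('k::field \<Rightarrow> 'r::ring_1 \<Rightarrow> 'r) \<Rightarrow> 'r set \<Rightarrow> bool" where
  "fdss scale S \<longleftrightarrow> subalgebra scale S \<and> fin_dim scale S \<and> semisimple_alg scale S"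

definition loc_fdss :: "('k::field \<Rightarrow> 'r::ring_1 \<Rightarrow> 'r) \<Rightarrow> 'r set \<Rightarrow> bool" where
  "loc_fdss scale A \<longleftrightarrow> (\<forall>F. finite F \<and> F \<subseteq> A \<longrightarrow> (\<exists>S. F \<subseteq> S \<and> S \<subseteq> A \<and> fdss scale S))"

definition corner :: "'r::ring_1 \<Rightarrow> 'r set \<Rightarrow> 'r set" where
  "corner a A = (\<lambda>x. a * x * a) ` A"

end

theory Submission
  imports Defs
begin

text \<open>
  Semisimplicity is used through one characterisation: a subalgebra with identity is semisimple
  iff each of its left ideals \<open>L\<close> has a right unit \<open>g \<in> L\<close>. It shows that corners \<open>eSe\<close> and
  homomorphic images of finite dimensional semisimple algebras are again such, that ideals of
  semisimple algebras are generated by central idempotents, and that an algebra split by a central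
  idempotent into two semisimple pieces is semisimple.

  (b) follows from (a) by passing to corners \<open>pSp\<close>. For (c), a finite dimensional semisimple
  \<open>S \<subseteq> pRp\<close> containing \<open>f\<close> and \<open>T\<close> has the ideal \<open>S \<inter> J\<close>, generated by a central idempotent
  of \<open>S\<close>. For (a), the \<open>J\<close>-components of a finite \<open>F \<subseteq> T \<oplus> J\<close> and \<open>1 - p\<close> lie in a finite
  dimensional semisimple \<open>S\<^sub>0 \<subseteq> J\<close>; (c) applied to \<open>p 1\<^sub>S\<^sub>0 p = 1\<^sub>S\<^sub>0 - (1 - p)\<close>,
  plus \<open>1 - p\<close>, yields an idempotent \<open>e \<in> J\<close> commuting with \<open>T\<close> and fixing \<open>S\<^sub>0\<close>. Then
  \<open>A = eS\<^sub>1e\<close>, for a finite dimensional semisimple \<open>S\<^sub>1 \<subseteq> J\<close> containing \<open>S\<^sub>0\<close>, \<open>e\<close> and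
  \<open>Te\<close>, is stable under multiplication by \<open>T\<close>, and \<open>T + A \<supseteq> F\<close> is finite dimensional
  semisimple, split by the central idempotent \<open>e\<close> into \<open>A\<close> and a homomorphic image of \<open>T\<close>.
\<close>

lemma is_identity_ofD:
  assumes "is_identity_of S u"
  shows "u \<in> S" and "x \<in> S \<Longrightarrow> u * x = x" and "x \<in> S \<Longrightarrow> x * u = x"
  using assms unfolding is_identity_of_def by auto

lemma semisimple_alg_obtain_identity:
  assumes "semisimple_alg scale S"
  obtains u where "is_identity_of S u"
  using assms unfolding semisimple_alg_def by blast

lemma fdssD:
  assumes "fdss scale S"
  shows "subalgebra scale S" and "fin_dim scale S" and "semisimple_alg scale S"
  using assms unfolding fdss_def by auto

lemma loc_fdssE:
  assumes "loc_fdss scale A" and "finite F" "F \<subseteq> A"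
  obtains S where "F \<subseteq> S" "S \<subseteq> A" "fdss scale S"
proof -
  have "\<exists>S. F \<subseteq> S \<and> S \<subseteq> A \<and> fdss scale S" using assms unfolding loc_fdss_def by simp
  then show thesis using that by blast
qed

lemma corner_idem:
  assumes "e * e = e" and "x \<in> corner e A"
  shows "e * x = x" and "x * e = x"
  using assms unfolding corner_def by (auto simp flip: mult.assoc) (simp add: mult.assoc)

lemma corner_memI: "x \<in> A \<Longrightarrow> e * x * e = x \<Longrightarrow> x \<in> corner e A"
  unfolding corner_def by (metis image_eqI)

locale k_algebra = vector_space scale for scale :: "'k::field \<Rightarrow> 'r::ring_1 \<Rightarrow> 'r" +
  assumes scale_mult_left: "scale c (x * y) = scale c x * y"
    and scale_mult_right: "scale c (x * y) = x * scale c y"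

lemma k_algebraI: "K_algebra scale \<Longrightarrow> k_algebra scale"
  unfolding K_algebra_def k_algebra_def k_algebra_axioms_def by metis

context k_algebra
begin

lemma module_hom_mult: "module_hom scale scale (\<lambda>x. a * x * b)"
  by unfold_locales (simp_all add: algebra_simps flip: scale_mult_left scale_mult_right)

lemma module_hom_mult_left: "module_hom scale scale (\<lambda>x. a * x)"
  using module_hom_mult[of a 1] by simp

lemma module_hom_mult_right: "module_hom scale scale (\<lambda>x. x * b)"
  using module_hom_mult[of 1 b] by simp

lemma subalgebra_subspace: "subalgebra scale S \<Longrightarrow> subspace S"
  and subalgebra_mult: "subalgebra scale S \<Longrightarrow> x \<in> S \<Longrightarrow> y \<in> S \<Longrightarrow> x * y \<in> S"
  unfolding subalgebra_def by auto

lemma left_ideal_inD: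
  assumes "left_ideal_in scale S L"
  shows "subspace L" and "L \<subseteq> S" and "a \<in> S \<Longrightarrow> x \<in> L \<Longrightarrow> a * x \<in> L"
  using assms unfolding left_ideal_in_def by auto

lemma left_ideal_in_mult_right:
  assumes S: "subalgebra scale S" and y: "y \<in> S"
  shows "left_ideal_in scale S ((\<lambda>s. s * y) ` S)"
  unfolding left_ideal_in_def
proof (intro conjI ballI)
  show "subspace ((\<lambda>s. s * y) ` S)"
    by (rule module_hom.subspace_image[OF module_hom_mult_right subalgebra_subspace[OF S]])
  show "(\<lambda>s. s * y) ` S \<subseteq> S" using subalgebra_mult[OF S] y by blast
  fix a x assume a: "a \<in> S" and "x \<in> (\<lambda>s. s * y) ` S"
  then obtain s where "s \<in> S" "a * x = (a * s) * y" by (auto simp: mult.assoc)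
  then show "a * x \<in> (\<lambda>s. s * y) ` S" using a subalgebra_mult[OF S] by blast
qed

lemma left_ideal_in_mult_central:
  assumes S: "subalgebra scale S" and c: "c \<in> S" and central: "\<And>s. s \<in> S \<Longrightarrow> c * s = s * c"
    and L: "left_ideal_in scale S L"
  shows "left_ideal_in scale ((*) c ` S) ((*) c ` L)"
  unfolding left_ideal_in_def
proof (intro conjI ballI)
  show "subspace ((*) c ` L)"
    using module_hom.subspace_image[OF module_hom_mult_left left_ideal_inD(1)[OF L]] .
  show "(*) c ` L \<subseteq> (*) c ` S" using left_ideal_inD(2)[OF L] by blast
  fix a x assume "a \<in> (*) c ` S" "x \<in> (*) c ` L"
  then obtain s l where sl: "s \<in> S" "l \<in> L" "a = c * s" "x = c * l" by blast
  then have "a * x = c * (s * c * l)" by (simp add: mult.assoc)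
  moreover have "s * c * l \<in> L" using sl c subalgebra_mult[OF S] left_ideal_inD(3)[OF L] by blast
  ultimately show "a * x \<in> (*) c ` L" by blast
qed

lemma semisimple_alg_right_unit:
  assumes "semisimple_alg scale S" and L: "left_ideal_in scale S L"
  obtains g where "g \<in> L" and "\<And>x. x \<in> L \<Longrightarrow> x * g = x"
proof -
  obtain u M where u: "is_identity_of S u" and M: "left_ideal_in scale S M" "L \<inter> M = {0}"
    and LM: "{x + y | x y. x \<in> L \<and> y \<in> M} = S"
    using assms unfolding semisimple_alg_def by blast
  obtain g g' where g: "g \<in> L" "g' \<in> M" "u = g + g'"
    using is_identity_ofD(1)[OF u] LM by blast
  have "x * g = x" if x: "x \<in> L" for x
  proof -
    have xS: "x \<in> S" using x left_ideal_inD(2)[OF L] by blast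
    have x_split: "x = x * g + x * g'"
      using is_identity_ofD(3)[OF u xS] g(3) by (simp flip: distrib_left)
    have "x * g \<in> L" using left_ideal_inD(3)[OF L xS g(1)] .
    then have "x * g' \<in> L"
      using subspace_diff[OF left_ideal_inD(1)[OF L] x] x_split by (metis add_diff_cancel_left')
    moreover have "x * g' \<in> M" using left_ideal_inD(3)[OF M(1) xS g(2)] .
    ultimately have "x * g' = 0" using M(2) by blast
    then show ?thesis using x_split by simp
  qed
  then show thesis using that g(1) by blast
qed

lemma semisimple_algI:
  assumes S: "subalgebra scale S" and u: "is_identity_of S u"
    and right_unit: "\<And>L. left_ideal_in scale S L \<Longrightarrow> \<exists>g\<in>L. \<forall>x\<in>L. x * g = x"
  shows "semisimple_alg scale S"
proof -
  have "\<exists>L'. left_ideal_in scale S L' \<and> L \<inter> L' = {0} \<and> {x + y | x y. x \<in> L \<and> y \<in> L'} = S"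
    if L: "left_ideal_in scale S L" for L
  proof -
    obtain g where g: "g \<in> L" "\<And>x. x \<in> L \<Longrightarrow> x * g = x" using right_unit[OF L] by blast
    have gS: "g \<in> S" using g(1) left_ideal_inD(2)[OF L] by blast
    define L' where "L' = S \<inter> {y. y * g = 0}"
    have "left_ideal_in scale S L'"
      unfolding left_ideal_in_def L'_def
      using subspace_inter[OF subalgebra_subspace[OF S] module_hom.subspace_kernel[OF module_hom_mult_right]]
        subalgebra_mult[OF S] by (auto simp: mult.assoc)
    moreover have "L \<inter> L' = {0}"
      using g(2) subspace_0[OF left_ideal_inD(1)[OF L]] subspace_0[OF subalgebra_subspace[OF S]]
      unfolding L'_def by auto
    moreover have "{x + y | x y. x \<in> L \<and> y \<in> L'} = S"
    proof
      show "{x + y | x y. x \<in> L \<and> y \<in> L'} \<subseteq> S"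
        using left_ideal_inD(2)[OF L] subspace_add[OF subalgebra_subspace[OF S]] unfolding L'_def by blast
      show "S \<subseteq> {x + y | x y. x \<in> L \<and> y \<in> L'}"
      proof
        fix y assume y: "y \<in> S"
        have "y * g \<in> L" using left_ideal_inD(3)[OF L y g(1)] .
        moreover have "y - y * g \<in> L'"
          using g y gS subspace_diff[OF subalgebra_subspace[OF S]] subalgebra_mult[OF S]
          unfolding L'_def by (simp add: left_diff_distrib mult.assoc)
        ultimately show "y \<in> {x + y | x y. x \<in> L \<and> y \<in> L'}" by force
      qed
    qed
    ultimately show ?thesis by blast
  qed
  then show ?thesis unfolding semisimple_alg_def using u by blast
qed

lemma subalgebra_corner:
  assumes S: "subalgebra scale S" and e: "e \<in> S" "e * e = e"
  shows "subalgebra scale (corner e S)"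
  unfolding subalgebra_def
proof (intro conjI ballI)
  show "subspace (corner e S)"
    unfolding corner_def by (rule module_hom.subspace_image[OF module_hom_mult subalgebra_subspace[OF S]])
  fix x y assume "x \<in> corner e S" "y \<in> corner e S"
  then obtain a b where ab: "a \<in> S" "b \<in> S" "x = e * a * e" "y = e * b * e"
    unfolding corner_def by blast
  then have "x * y = e * (a * e * b) * e" using e(2) by (metis mult.assoc)
  then show "x * y \<in> corner e S"
    unfolding corner_def using ab e(1) subalgebra_mult[OF S] by blast
qed

lemma semisimple_alg_corner:
  assumes S: "subalgebra scale S" and ss: "semisimple_alg scale S" and e: "e \<in> S" "e * e = e"
  shows "semisimple_alg scale (corner e S)"
proof (rule semisimple_algI[OF subalgebra_corner[OF S e]])
  show "is_identity_of (corner e S) e"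
    unfolding is_identity_of_def using corner_idem[OF e(2)] corner_memI[OF e(1)] e(2) by auto
  fix L assume L: "left_ideal_in scale (corner e S) L"
  have L_corner: "e * l = l" "l * e = l" "l \<in> corner e S" if "l \<in> L" for l
    using corner_idem[OF e(2)] that left_ideal_inD(2)[OF L] by auto
  \<comment> \<open>a right unit \<open>g\<close> of the left ideal \<open>N \<supseteq> L\<close> of \<open>S\<close> is cut down to the right unit
    \<open>e * g * e\<close> of \<open>L\<close>\<close>
  define N where "N = S \<inter> (\<Inter>s\<in>S. (\<lambda>x. e * s * x * e) -` L)"
  have "left_ideal_in scale S N"
    unfolding left_ideal_in_def
  proof (intro conjI ballI)
    show "subspace N"
      unfolding N_def
      using module_hom.subspace_vimage[OF module_hom_mult left_ideal_inD(1)[OF L]]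
      by (intro subspace_inter subalgebra_subspace[OF S] subspace_Inter) auto
    show "N \<subseteq> S" unfolding N_def by blast
    fix a x assume a: "a \<in> S" and x: "x \<in> N"
    have "e * s * (a * x) * e = e * (s * a) * x * e" for s by (simp add: mult.assoc)
    then show "a * x \<in> N"
      using a x subalgebra_mult[OF S] unfolding N_def by auto
  qed
  then obtain g where g: "g \<in> N" "\<And>x. x \<in> N \<Longrightarrow> x * g = x"
    using semisimple_alg_right_unit[OF ss] by blast
  have L_N: "L \<subseteq> N"
  proof
    fix l assume l: "l \<in> L"
    have "e * s * l * e \<in> L" if "s \<in> S" for s
    proof -
      have "e * s * l * e = (e * s * e) * l" using L_corner[OF l] by (metis mult.assoc)
      then show ?thesis
        using left_ideal_inD(3)[OF L _ l] corner_memI that by (simp add: corner_def)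
    qed
    moreover have "l \<in> S"
      using L_corner(3)[OF l] e(1) subalgebra_mult[OF S] unfolding corner_def by blast
    ultimately show "l \<in> N" unfolding N_def by blast
  qed
  have "e * e * g * e \<in> L" using g(1) e(1) unfolding N_def by blast
  then have "e * g * e \<in> L" using e(2) by simp
  moreover have "l * (e * g * e) = l" if "l \<in> L" for l
    using L_corner[OF that] g(2) L_N that by (metis mult.assoc subsetD)
  ultimately show "\<exists>h\<in>L. \<forall>l\<in>L. l * h = l" by blast
qed

lemma semisimple_alg_image:
  assumes S: "subalgebra scale S" and ss: "semisimple_alg scale S"
    and hom: "module_hom scale scale \<phi>"
    and mult: "\<And>x y. x \<in> S \<Longrightarrow> y \<in> S \<Longrightarrow> \<phi> (x * y) = \<phi> x * \<phi> y"
  shows "semisimple_alg scale (\<phi> ` S)"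
proof -
  obtain u where u: "is_identity_of S u" using semisimple_alg_obtain_identity[OF ss] .
  have "subalgebra scale (\<phi> ` S)"
    unfolding subalgebra_def
    using module_hom.subspace_image[OF hom subalgebra_subspace[OF S]] subalgebra_mult[OF S]
    by (auto simp flip: mult)
  moreover have "is_identity_of (\<phi> ` S) (\<phi> u)"
    using u unfolding is_identity_of_def by (auto simp flip: mult)
  ultimately show ?thesis
  proof (rule semisimple_algI)
    fix L assume L: "left_ideal_in scale (\<phi> ` S) L"
    have "left_ideal_in scale S (S \<inter> \<phi> -` L)"
      unfolding left_ideal_in_def
      using subspace_inter[OF subalgebra_subspace[OF S]
          module_hom.subspace_vimage[OF hom left_ideal_inD(1)[OF L]]]
        subalgebra_mult[OF S] left_ideal_inD(3)[OF L] by (auto simp: mult)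
    then obtain g where g: "g \<in> S \<inter> \<phi> -` L" "\<And>x. x \<in> S \<inter> \<phi> -` L \<Longrightarrow> x * g = x"
      using semisimple_alg_right_unit[OF ss] by blast
    have "y * \<phi> g = y" if y: "y \<in> L" for y
    proof -
      obtain x where x: "x \<in> S" "y = \<phi> x" using y left_ideal_inD(2)[OF L] by blast
      then have "y * \<phi> g = \<phi> (x * g)" using mult g(1) by simp
      also have "\<dots> = y" using g(2)[of x] x y by simp
      finally show ?thesis .
    qed
    then show "\<exists>h\<in>L. \<forall>y\<in>L. y * h = y" using g(1) by blast
  qed
qed

lemma semisimple_alg_central_split:
  assumes S: "subalgebra scale S" and u: "is_identity_of S u"
    and c: "c \<in> S" "c * c = c" and central: "\<And>s. s \<in> S \<Longrightarrow> c * s = s * c"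
    and ss_c: "semisimple_alg scale ((*) c ` S)"
    and ss_u_c: "semisimple_alg scale ((*) (u - c) ` S)"
  shows "semisimple_alg scale S"
proof (rule semisimple_algI[OF S u])
  fix L assume L: "left_ideal_in scale S L"
  have component: "\<exists>g\<in>L. \<forall>x\<in>L. x * g = d * x"
    if d: "d \<in> S" "d * d = d" "\<And>s. s \<in> S \<Longrightarrow> d * s = s * d"
      and ss: "semisimple_alg scale ((*) d ` S)" for d
  proof -
    obtain g where g: "g \<in> (*) d ` L" "\<And>y. y \<in> (*) d ` L \<Longrightarrow> y * g = y"
      using semisimple_alg_right_unit[OF ss left_ideal_in_mult_central[OF S d(1) d(3) L]] by blast
    then obtain l where l: "l \<in> L" "g = d * l" by blast
    have dg: "d * g = g" unfolding l(2) by (simp add: d(2) flip: mult.assoc)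
    have "x * g = d * x" if x: "x \<in> L" for x
    proof -
      have "x * g = (x * d) * g" using dg by (simp add: mult.assoc)
      also have "\<dots> = (d * x) * g" using d(3) x left_ideal_inD(2)[OF L] by auto
      also have "\<dots> = d * x" using g(2) x by (simp add: image_eqI)
      finally show ?thesis .
    qed
    moreover have "g \<in> L" using l left_ideal_inD(3)[OF L d(1)] by blast
    ultimately show ?thesis by blast
  qed
  obtain g1 where g1: "g1 \<in> L" "\<And>x. x \<in> L \<Longrightarrow> x * g1 = c * x"
    using component[OF c central ss_c] by blast
  have uS: "u \<in> S" using is_identity_ofD(1)[OF u] .
  have "u - c \<in> S" using subspace_diff[OF subalgebra_subspace[OF S] uS c(1)] .
  moreover have "(u - c) * (u - c) = u - c"
    using c is_identity_ofD(2,3)[OF u c(1)] is_identity_ofD(2)[OF u uS] by (simp add: algebra_simps)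
  moreover have "(u - c) * s = s * (u - c)" if "s \<in> S" for s
    using central[OF that] is_identity_ofD(2,3)[OF u that] by (simp add: algebra_simps)
  ultimately obtain g2 where g2: "g2 \<in> L" "\<And>x. x \<in> L \<Longrightarrow> x * g2 = (u - c) * x"
    using component[OF _ _ _ ss_u_c] by blast
  have "x * (g1 + g2) = x" if x: "x \<in> L" for x
  proof -
    have "x * (g1 + g2) = c * x + (u - c) * x" using g1(2)[OF x] g2(2)[OF x] by (simp add: distrib_left)
    also have "\<dots> = u * x" by (simp add: left_diff_distrib)
    also have "\<dots> = x" using is_identity_ofD(2)[OF u] x left_ideal_inD(2)[OF L] by blast
    finally show ?thesis .
  qed
  then show "\<exists>g\<in>L. \<forall>x\<in>L. x * g = x"
    using g1(1) g2(1) subspace_add[OF left_ideal_inD(1)[OF L]] by blast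
qed

lemma semisimple_alg_sandwich_zero:
  assumes S: "subalgebra scale S" and ss: "semisimple_alg scale S"
    and y: "y \<in> S" and zero: "\<And>s. s \<in> S \<Longrightarrow> y * s * y = 0"
  shows "y = 0"
proof -
  obtain g where g: "g \<in> (\<lambda>s. s * y) ` S" "\<And>x. x \<in> (\<lambda>s. s * y) ` S \<Longrightarrow> x * g = x"
    using semisimple_alg_right_unit[OF ss left_ideal_in_mult_right[OF S y]] by blast
  obtain u where "is_identity_of S u" using semisimple_alg_obtain_identity[OF ss] .
  then have "u \<in> S" "u * y = y" using is_identity_ofD y by auto
  then have "y \<in> (\<lambda>s. s * y) ` S" by force
  then have "y = y * g" using g(2) by simp
  also obtain s where "s \<in> S" "g = s * y" using g(1) by blast
  then have "y * g = 0" using zero by (simp add: mult.assoc)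
  finally show ?thesis .
qed

lemma semisimple_alg_ideal_central_unit:
  assumes S: "subalgebra scale S" and ss: "semisimple_alg scale S"
    and I: "left_ideal_in scale S I" and I_right: "\<And>x s. x \<in> I \<Longrightarrow> s \<in> S \<Longrightarrow> x * s \<in> I"
  obtains e where "e \<in> I" and "\<And>x. x \<in> I \<Longrightarrow> e * x = x \<and> x * e = x"
    and "\<And>s. s \<in> S \<Longrightarrow> e * s = s * e"
proof -
  obtain e where e: "e \<in> I" "\<And>x. x \<in> I \<Longrightarrow> x * e = x"
    using semisimple_alg_right_unit[OF ss I] by blast
  have IS: "I \<subseteq> S" and eS: "e \<in> S" using left_ideal_inD(2)[OF I] e(1) by auto
  have left_unit: "e * x = x" if x: "x \<in> I" for x
  proof -
    have ex: "e * x \<in> I" using left_ideal_inD(3)[OF I eS x] .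
    define y where "y = x - e * x"
    have yI: "y \<in> I" unfolding y_def using subspace_diff[OF left_ideal_inD(1)[OF I] x ex] .
    have "w * y = 0" if "w \<in> I" for w
      using e(2)[OF that] unfolding y_def by (simp add: right_diff_distrib flip: mult.assoc)
    then have "y * s * y = 0" if "s \<in> S" for s
      using I_right[OF yI that] by blast
    then have "y = 0" using semisimple_alg_sandwich_zero[OF S ss] yI IS by blast
    then show ?thesis unfolding y_def by simp
  qed
  have "e * s = s * e" if s: "s \<in> S" for s
  proof -
    have "e * s = e * s * e" using e(2) I_right[OF e(1) s] by simp
    also have "\<dots> = s * e" using left_unit left_ideal_inD(3)[OF I s e(1)] by (simp add: mult.assoc)
    finally show ?thesis .
  qed
  then show thesis using that e left_unit by blast
qed

lemma fin_dim_image: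
  assumes "module_hom scale scale f" and "fin_dim scale S"
  shows "fin_dim scale (f ` S)"
proof -
  obtain B where "finite B" "S \<subseteq> span B" using assms(2) unfolding fin_dim_def by blast
  then show ?thesis
    unfolding fin_dim_def
    by (intro exI[of _ "f ` B"]) (simp add: module_hom.span_image[OF assms(1)] image_mono)
qed

lemma fin_dim_set_sum:
  assumes "fin_dim scale A" and "fin_dim scale B"
  shows "fin_dim scale {a + b | a b. a \<in> A \<and> b \<in> B}"
proof -
  obtain C D where "finite C" "A \<subseteq> span C" "finite D" "B \<subseteq> span D"
    using assms unfolding fin_dim_def by blast
  then show ?thesis
    unfolding fin_dim_def
    by (intro exI[of _ "C \<union> D"]) (auto intro!: span_add intro: span_mono[THEN subsetD])
qed

lemma fin_dim_obtain_basis: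
  assumes "subspace S" and "fin_dim scale S"
  obtains B where "finite B" and "B \<subseteq> S" and "S \<subseteq> span B"
proof -
  obtain C where C: "finite C" "S \<subseteq> span C" using assms(2) unfolding fin_dim_def by blast
  obtain B where B: "B \<subseteq> S" "independent B" "S \<subseteq> span B" by (rule basis_exists)
  have "finite B" using independent_span_bound[OF C(1) B(2)] B(1) C(2) by blast
  with B that show thesis by blast
qed

lemma fdss_corner:
  assumes "fdss scale S" and "e \<in> S" "e * e = e"
  shows "fdss scale (corner e S)"
  using assms subalgebra_corner semisimple_alg_corner
    fin_dim_image[OF module_hom_mult, of S e e, folded corner_def]
  unfolding fdss_def by blast

lemma subalgebra_set_sum:
  assumes T: "subalgebra scale T" and A: "subalgebra scale A"
    and absorb: "\<And>t a. t \<in> T \<Longrightarrow> a \<in> A \<Longrightarrow> t * a \<in> A \<and> a * t \<in> A"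
  shows "subalgebra scale {t + a | t a. t \<in> T \<and> a \<in> A}"
  unfolding subalgebra_def
proof (intro conjI ballI)
  show "subspace {t + a | t a. t \<in> T \<and> a \<in> A}"
    using subspace_sums[OF subalgebra_subspace[OF T] subalgebra_subspace[OF A]] .
  fix x y assume "x \<in> {t + a | t a. t \<in> T \<and> a \<in> A}" "y \<in> {t + a | t a. t \<in> T \<and> a \<in> A}"
  then obtain t a t' a' where ta: "t \<in> T" "a \<in> A" "t' \<in> T" "a' \<in> A" "x = t + a" "y = t' + a'"
    by blast
  then have "x * y = t * t' + (t * a' + a * t' + a * a')" by (simp add: algebra_simps)
  moreover have "t * a' + a * t' + a * a' \<in> A"
    using ta absorb subalgebra_mult[OF A] subspace_add[OF subalgebra_subspace[OF A]] by simp
  ultimately show "x * y \<in> {t + a | t a. t \<in> T \<and> a \<in> A}"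
    using ta subalgebra_mult[OF T] by blast
qed

lemma is_identity_of_set_sum:
  assumes p: "is_identity_of T p" and e: "is_identity_of A e" and "subspace A"
    and e_comm: "\<And>t. t \<in> T \<Longrightarrow> e * t = t * e"
    and absorb: "\<And>t a. t \<in> T \<Longrightarrow> a \<in> A \<Longrightarrow> t * a \<in> A \<and> a * t \<in> A"
  shows "is_identity_of {t + a | t a. t \<in> T \<and> a \<in> A} (p + e - p * e)"
proof -
  define u where "u = p + e - p * e"
  note p_unit = is_identity_ofD(2,3)[OF p] and e_unit = is_identity_ofD(2,3)[OF e]
  have pT: "p \<in> T" and eA: "e \<in> A" using is_identity_ofD(1) p e by auto
  have u_T: "u * t = t \<and> t * u = t" if t: "t \<in> T" for t
  proof -
    have "p * e * t = t * e"
      using p_unit[OF t] by (simp add: mult.assoc e_comm[OF t] flip: mult.assoc[of p t])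
    moreover have "t * (p * e) = t * e" using p_unit[OF t] by (simp flip: mult.assoc)
    ultimately show ?thesis
      unfolding u_def using p_unit[OF t] e_comm[OF t]
      by (simp add: distrib_left distrib_right left_diff_distrib right_diff_distrib)
  qed
  have u_A: "u * a = a \<and> a * u = a" if a: "a \<in> A" for a
  proof -
    have "p * e * a = p * a" using e_unit[OF a] by (simp add: mult.assoc)
    moreover have "a * (p * e) = a * p" using e_unit absorb[OF pT a] by (simp flip: mult.assoc)
    ultimately show ?thesis
      unfolding u_def using e_unit[OF a]
      by (simp add: distrib_left distrib_right left_diff_distrib right_diff_distrib)
  qed
  have "e - p * e \<in> A" using subspace_diff[OF \<open>subspace A\<close> eA] absorb[OF pT eA] by blast
  then have "u \<in> {t + a | t a. t \<in> T \<and> a \<in> A}" unfolding u_def using pT by force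
  moreover have "u * (t + a) = t + a \<and> (t + a) * u = t + a" if "t \<in> T" "a \<in> A" for t a
    using u_T[OF that(1)] u_A[OF that(2)] by (simp add: distrib_left distrib_right)
  ultimately show ?thesis unfolding is_identity_of_def u_def by blast
qed

lemma fdss_set_sum:
  assumes T: "fdss scale T" and A: "fdss scale A" and e: "is_identity_of A e"
    and e_comm: "\<And>t. t \<in> T \<Longrightarrow> e * t = t * e"
    and absorb: "\<And>t a. t \<in> T \<Longrightarrow> a \<in> A \<Longrightarrow> t * a \<in> A \<and> a * t \<in> A"
  shows "fdss scale {t + a | t a. t \<in> T \<and> a \<in> A}" (is "fdss scale ?S")
proof -
  note T_alg = fdssD(1)[OF T] and A_alg = fdssD(1)[OF A]
  obtain p where p: "is_identity_of T p" using semisimple_alg_obtain_identity[OF fdssD(3)[OF T]] .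
  define u where "u = p + e - p * e"
  have S: "subalgebra scale ?S" using subalgebra_set_sum[OF T_alg A_alg absorb] .
  have u: "is_identity_of ?S u"
    unfolding u_def using is_identity_of_set_sum[OF p e subalgebra_subspace[OF A_alg] e_comm absorb] .
  note u_unit = is_identity_ofD(2,3)[OF u] and e_unit = is_identity_ofD(2,3)[OF e]
  have eA: "e \<in> A" using is_identity_ofD(1)[OF e] .
  have T_S: "t \<in> ?S" if "t \<in> T" for t
    using that subspace_0[OF subalgebra_subspace[OF A_alg]] by force
  have A_S: "a \<in> ?S" if "a \<in> A" for a
    using that subspace_0[OF subalgebra_subspace[OF T_alg]] by force
  have e_central: "e * s = s * e" if "s \<in> ?S" for s
    using that e_comm e_unit by (auto simp: distrib_left distrib_right)
  \<comment> \<open>the central idempotent \<open>e\<close> splits \<open>?S\<close> into \<open>A\<close> and a homomorphic image of \<open>T\<close>\<close>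
  have "(*) e ` ?S = A"
  proof
    show "(*) e ` ?S \<subseteq> A"
      using e_comm e_unit absorb[OF _ eA] subspace_add[OF subalgebra_subspace[OF A_alg]]
      by (auto simp: distrib_left)
    show "A \<subseteq> (*) e ` ?S"
    proof
      fix a assume a: "a \<in> A"
      then have "a = e * a" using e_unit by simp
      then show "a \<in> (*) e ` ?S" using A_S[OF a] by blast
    qed
  qed
  moreover have "(*) (u - e) ` ?S = (*) (u - e) ` T"
  proof -
    have "(u - e) * (t + a) = (u - e) * t" if "a \<in> A" for t a
      using that u_unit[OF A_S] e_unit by (simp add: distrib_left left_diff_distrib)
    then show ?thesis using T_S by fastforce
  qed
  moreover have "semisimple_alg scale ((*) (u - e) ` T)"
  proof (rule semisimple_alg_image[OF T_alg fdssD(3)[OF T] module_hom_mult_left])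
    have idem: "(u - e) * (u - e) = u - e"
      using u_unit[OF is_identity_ofD(1)[OF u]] u_unit[OF A_S[OF eA]] e_unit[OF eA]
      by (simp add: algebra_simps)
    fix x y assume x: "x \<in> T"
    have "x * (u - e) = (u - e) * x"
      using u_unit[OF T_S[OF x]] e_comm[OF x] by (simp add: left_diff_distrib right_diff_distrib)
    then have "(u - e) * x * ((u - e) * y) = (u - e) * (u - e) * (x * y)" by (metis mult.assoc)
    then show "(u - e) * (x * y) = (u - e) * x * ((u - e) * y)" using idem by simp
  qed
  ultimately have "semisimple_alg scale ?S"
    using semisimple_alg_central_split[OF S u A_S[OF eA] _ e_central] fdssD(3)[OF A] e_unit[OF eA]
    by simp
  then show ?thesis
    using S fin_dim_set_sum fdssD(2) T A unfolding fdss_def by blast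
qed

lemma loc_fdss_corner:
  assumes "loc_fdss scale UNIV" and "e * e = e"
  shows "loc_fdss scale (corner e UNIV)"
  unfolding loc_fdss_def
proof (intro allI impI)
  fix F assume F: "finite F \<and> F \<subseteq> corner e UNIV"
  then have "finite (insert e F)" by simp
  then obtain S where S: "insert e F \<subseteq> S" "fdss scale S"
    by (rule loc_fdssE[OF assms(1)]) simp_all
  have "x \<in> corner e S" if x: "x \<in> F" for x
  proof (rule corner_memI)
    show "x \<in> S" using x S(1) by blast
    have "x \<in> corner e UNIV" using x F by blast
    then show "e * x * e = x" using corner_idem[OF assms(2)] by simp
  qed
  then have "F \<subseteq> corner e S" by blast
  moreover have "corner e S \<subseteq> corner e UNIV" unfolding corner_def by blast
  moreover have "fdss scale (corner e S)" using fdss_corner S assms(2) by blast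
  ultimately show "\<exists>S. F \<subseteq> S \<and> S \<subseteq> corner e UNIV \<and> fdss scale S" by blast
qed

end

locale split_extension = k_algebra scale for scale :: "'k::field \<Rightarrow> 'r::ring_1 \<Rightarrow> 'r" +
  fixes J T :: "'r set" and p :: 'r
  assumes J_ideal: "alg_ideal scale J"
    and J_loc: "loc_fdss scale J"
    and T_fdss: "fdss scale T"
    and p_id: "is_identity_of T p"
    and sum: "{t + j | t j. t \<in> T \<and> j \<in> J} = UNIV"
    and direct: "T \<inter> J = {0}"
begin

definition centralising_idempotents :: bool where
  "centralising_idempotents \<longleftrightarrow> (\<forall>f. f \<in> corner p J \<and> f * f = f \<longrightarrow>
     (\<exists>e. e \<in> corner p J \<and> e * e = e \<and> f \<in> corner e J \<and> (\<forall>t\<in>T. e * t = t * e)))"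

lemma J_subspace: "subspace J"
  and J_mult: "x \<in> J \<Longrightarrow> r * x \<in> J \<and> x * r \<in> J"
  using J_ideal unfolding alg_ideal_def by auto

lemma corner_J_subset: "corner e J \<subseteq> J"
  unfolding corner_def using J_mult by blast

lemma T_subspace: "subspace T"
  using subalgebra_subspace[OF fdssD(1)[OF T_fdss]] .

lemma T_obtain_basis:
  obtains B where "finite B" and "B \<subseteq> T" and "T \<subseteq> span B"
  using fin_dim_obtain_basis[OF T_subspace fdssD(2)[OF T_fdss]] .

lemma p_unit: "p \<in> T" "t \<in> T \<Longrightarrow> p * t = t \<and> t * p = t"
  using is_identity_ofD[OF p_id] by auto

lemma p_idem: "p * p = p"
  using p_unit by blast

lemma one_minus_p_in_J: "1 - p \<in> J"
proof -
  obtain t j where tj: "t \<in> T" "j \<in> J" "1 = t + j" using sum by blast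
  then have "p = t * p + j * p" by (metis distrib_right mult_1_left)
  then have "p - t = j * p" using p_unit(2)[OF tj(1)] by (metis add_diff_cancel_left')
  then have "p - t \<in> T \<inter> J" using subspace_diff[OF T_subspace p_unit(1) tj(1)] J_mult[OF tj(2)] by auto
  then have "t = p" using direct by auto
  then show ?thesis using tj(2,3) by (metis add_diff_cancel_left')
qed

lemma centralising_idempotent_if_loc_fdss_corner:
  assumes "loc_fdss scale (corner p UNIV)" and f: "f \<in> corner p J"
  shows "\<exists>e. e \<in> corner p J \<and> e * e = e \<and> f \<in> corner e J \<and> (\<forall>t\<in>T. e * t = t * e)"
proof -
  obtain B where B: "finite B" "B \<subseteq> T" "T \<subseteq> span B" by (rule T_obtain_basis)
  have "T \<subseteq> corner p UNIV" using p_unit corner_memI[of _ UNIV p] by (metis UNIV_I subsetI)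
  then have "insert f B \<subseteq> corner p UNIV" using B(2) f unfolding corner_def by blast
  then obtain S where S: "insert f B \<subseteq> S" "S \<subseteq> corner p UNIV" "fdss scale S"
    by (rule loc_fdssE[OF assms(1) finite_insert[THEN iffD2, OF B(1)]])
  note S_alg = fdssD(1)[OF S(3)]
  have T_S: "T \<subseteq> S"
    using B(3) span_minimal[of B S] S(1) subalgebra_subspace[OF S_alg] by blast
  have "left_ideal_in scale S (S \<inter> J)"
    unfolding left_ideal_in_def using subspace_inter[OF subalgebra_subspace[OF S_alg] J_subspace]
      subalgebra_mult[OF S_alg] J_mult by auto
  then obtain e where e: "e \<in> S \<inter> J" "\<And>x. x \<in> S \<inter> J \<Longrightarrow> e * x = x \<and> x * e = x"
    "\<And>s. s \<in> S \<Longrightarrow> e * s = s * e"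
  proof (rule semisimple_alg_ideal_central_unit[OF S_alg fdssD(3)[OF S(3)]])
    show "x * s \<in> S \<inter> J" if "x \<in> S \<inter> J" "s \<in> S" for x s
      using that subalgebra_mult[OF S_alg] J_mult by blast
  qed blast
  have "p * e * p = e" using e(1) S(2) corner_idem[OF p_idem] by auto
  then have "e \<in> corner p J" using e(1) corner_memI by blast
  moreover have "f \<in> S \<inter> J" using f S(1) corner_J_subset by blast
  then have "f \<in> corner e J" using e(2)[of f] corner_memI[of f J e] by (simp add: mult.assoc)
  ultimately show ?thesis using e T_S by blast
qed

lemma centralising_idempotent_above:
  assumes centralising_idempotents
    and f: "f \<in> J" "f * f = f" "f * (1 - p) = 1 - p" "(1 - p) * f = 1 - p"
  obtains e where "e \<in> J" "e * e = e" "e * f = f" "f * e = f" "\<And>t. t \<in> T \<Longrightarrow> e * t = t * e"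
proof -
  define q where "q = 1 - p"
  have qq: "q * q = q" and pq: "p * q = 0" "q * p = 0"
    unfolding q_def using p_idem by (simp_all add: algebra_simps)
  have fq: "f * q = q" "q * f = q" using f(3,4) unfolding q_def .
  define f' where "f' = p * f * p"
  have f'_eq: "f' = f - q"
  proof -
    have "f' = (1 - q) * f * (1 - q)" unfolding f'_def q_def by simp
    also have "\<dots> = f - q * f - f * q + q * f * q" by (simp add: algebra_simps)
    also have "\<dots> = f - q" using fq qq by simp
    finally show ?thesis .
  qed
  have "f' \<in> corner p J" unfolding f'_def corner_def using f(1) by blast
  moreover have "f' * f' = f'"
  proof -
    have "f' * f' = f * f - f * q - q * f + q * q" unfolding f'_eq by (simp add: algebra_simps)
    then show ?thesis using f(2) fq qq f'_eq by simp
  qed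
  ultimately obtain e' where e': "e' \<in> corner p J" "e' * e' = e'" "f' \<in> corner e' J"
    "\<And>t. t \<in> T \<Longrightarrow> e' * t = t * e'"
    using assms(1) unfolding centralising_idempotents_def by blast
  have e'q: "e' * q = 0" "q * e' = 0"
    using corner_idem[OF p_idem e'(1)] unfolding q_def by (simp_all add: algebra_simps)
  have f'e': "e' * f' = f'" "f' * e' = f'" using corner_idem[OF e'(2) e'(3)] .
  have f'q: "f' * q = 0" "q * f' = 0"
    unfolding f'_def using pq by (simp_all add: mult.assoc flip: mult.assoc[of q])
  define e where "e = e' + q"
  have "e \<in> J"
    unfolding e_def q_def
    using e'(1) corner_J_subset one_minus_p_in_J subspace_add[OF J_subspace] by blast
  moreover have "e * e = e" unfolding e_def using e'(2) e'q qq by (simp add: algebra_simps)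
  moreover have "f = f' + q" using f'_eq by simp
  then have "e * f = f" "f * e = f" unfolding e_def using f'e' e'q f'q qq by (simp_all add: algebra_simps)
  moreover have "e * t = t * e" if "t \<in> T" for t
    unfolding e_def q_def using e'(4)[OF that] p_unit(2)[OF that] by (simp add: algebra_simps)
  ultimately show thesis using that by blast
qed

lemma T_stable_fdss_cover:
  assumes centralising_idempotents and G: "finite G" "G \<subseteq> J"
  obtains A e where "fdss scale A" "G \<subseteq> A" "is_identity_of A e"
    "\<And>t. t \<in> T \<Longrightarrow> e * t = t * e" "\<And>t a. t \<in> T \<Longrightarrow> a \<in> A \<Longrightarrow> t * a \<in> A \<and> a * t \<in> A"
proof -
  have "finite (insert (1 - p) G)" "insert (1 - p) G \<subseteq> J" using G one_minus_p_in_J by auto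
  then obtain S0 where S0: "insert (1 - p) G \<subseteq> S0" "S0 \<subseteq> J" "fdss scale S0"
    by (rule loc_fdssE[OF J_loc])
  obtain f where f: "is_identity_of S0 f"
    using semisimple_alg_obtain_identity[OF fdssD(3)[OF S0(3)]] .
  obtain e where e: "e \<in> J" "e * e = e" "e * f = f" "f * e = f" "\<And>t. t \<in> T \<Longrightarrow> e * t = t * e"
    by (rule centralising_idempotent_above[OF assms(1)]) (use S0 is_identity_ofD[OF f] in auto)
  obtain B where B: "finite B" "B \<subseteq> T" "T \<subseteq> span B" by (rule T_obtain_basis)
  \<comment> \<open>the products \<open>t * e\<close> make the corner \<open>e S\<^sub>1 e\<close> stable under multiplication by \<open>T\<close>\<close>
  have "finite (G \<union> {e} \<union> (\<lambda>t. t * e) ` B)" "G \<union> {e} \<union> (\<lambda>t. t * e) ` B \<subseteq> J"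
    using G B(1) e(1) J_mult by auto
  then obtain S1 where S1: "G \<union> {e} \<union> (\<lambda>t. t * e) ` B \<subseteq> S1" "fdss scale S1"
    by (rule loc_fdssE[OF J_loc])
  note S1_alg = fdssD(1)[OF S1(2)]
  have "(\<lambda>t. t * e) ` B \<subseteq> S1" using S1(1) by blast
  then have "(\<lambda>t. t * e) ` span B \<subseteq> S1"
    using span_minimal[OF _ subalgebra_subspace[OF S1_alg]]
    by (simp add: module_hom.span_image[OF module_hom_mult_right, symmetric])
  then have Te: "t * e \<in> S1" if "t \<in> T" for t
    using that B(3) by blast
  define A where "A = corner e S1"
  have "fdss scale A" unfolding A_def using fdss_corner S1 e(2) by blast
  moreover have "G \<subseteq> A"
  proof
    fix g assume g: "g \<in> G"
    then have fg: "f * g = g" "g * f = g" using S0(1) is_identity_ofD[OF f] by auto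
    have "e * (f * g * f) * e = (e * f) * g * (f * e)" by (simp add: mult.assoc)
    then have "e * g * e = g" using e(3,4) fg by simp
    then show "g \<in> A" unfolding A_def using g S1(1) corner_memI by blast
  qed
  moreover have "is_identity_of A e"
    unfolding is_identity_of_def A_def
    using corner_idem[OF e(2)] corner_memI[of e S1 e] e(2) S1(1) by auto
  moreover have "t * a \<in> A \<and> a * t \<in> A" if t: "t \<in> T" and a: "a \<in> A" for t a
  proof -
    obtain s where s: "s \<in> S1" "a = e * s * e" using a unfolding A_def corner_def by blast
    have "e * t * e = t * e" by (simp add: e(5)[OF t] mult.assoc e(2))
    then have "e * (t * e * s) * e = t * e * s * e" by (simp flip: mult.assoc)
    then have "t * a = e * (t * e * s) * e" using s(2) by (simp add: mult.assoc)
    moreover have "a * t = e * (s * (t * e)) * e" using s(2) e(2) e(5)[OF t] by (simp add: mult.assoc)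
    moreover have "t * e * s \<in> S1" "s * (t * e) \<in> S1"
      using Te[OF t] s(1) subalgebra_mult[OF S1_alg] by auto
    ultimately show ?thesis unfolding A_def corner_def by blast
  qed
  ultimately show thesis using that e(5) by blast
qed

lemma loc_fdss_if_centralising_idempotents:
  assumes centralising_idempotents
  shows "loc_fdss scale UNIV"
  unfolding loc_fdss_def
proof (intro allI impI)
  fix F :: "'r set" assume F: "finite F \<and> F \<subseteq> UNIV"
  have "\<exists>j. j \<in> J \<and> x - j \<in> T" for x
  proof -
    obtain t j where "t \<in> T" "j \<in> J" "x = t + j" using sum by blast
    then show ?thesis by auto
  qed
  then obtain jp where jp: "\<And>x. jp x \<in> J \<and> x - jp x \<in> T" by metis
  obtain A e where A: "fdss scale A" "jp ` F \<subseteq> A" "is_identity_of A e"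
    "\<And>t. t \<in> T \<Longrightarrow> e * t = t * e" "\<And>t a. t \<in> T \<Longrightarrow> a \<in> A \<Longrightarrow> t * a \<in> A \<and> a * t \<in> A"
    by (rule T_stable_fdss_cover[OF assms, of "jp ` F"]) (use F jp in auto)
  have "x \<in> {t + a | t a. t \<in> T \<and> a \<in> A}" if "x \<in> F" for x
  proof -
    have "x = (x - jp x) + jp x" by simp
    then show ?thesis using jp[of x] A(2) that by blast
  qed
  then show "\<exists>S. F \<subseteq> S \<and> S \<subseteq> UNIV \<and> fdss scale S"
    using fdss_set_sum[OF T_fdss A(1,3,4,5)] by blast
qed

end

theorem corollary4p3:
  fixes scale :: "'k::field \<Rightarrow> 'r::ring_1 \<Rightarrow> 'r"
    and J T :: "'r set" and p :: 'r
  assumes alg: "K_algebra scale"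
    and J_ideal: "alg_ideal scale J"
    and J_loc: "loc_fdss scale J"
    and T_fdss: "fdss scale T"
    and p_id: "is_identity_of T p"
    and sum: "{t + j | t j. t \<in> T \<and> j \<in> J} = UNIV"
    and direct: "T \<inter> J = {0}"
  shows "(loc_fdss scale UNIV \<longleftrightarrow> loc_fdss scale (corner p UNIV)) \<and>
         (loc_fdss scale (corner p UNIV) \<longleftrightarrow>
           (\<forall>f. f \<in> corner p J \<and> f * f = f \<longrightarrow>
              (\<exists>e. e \<in> corner p J \<and> e * e = e \<and> f \<in> corner e J \<and> (\<forall>t\<in>T. e * t = t * e))))"
proof -
  interpret split_extension scale J T p
    using k_algebraI[OF alg] assms(2-)
    by (simp add: split_extension_def split_extension_axioms_def)
  have a_b: "loc_fdss scale UNIV \<Longrightarrow> loc_fdss scale (corner p UNIV)"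
    using loc_fdss_corner p_idem by blast
  have b_c: "loc_fdss scale (corner p UNIV) \<Longrightarrow> centralising_idempotents"
    unfolding centralising_idempotents_def
    using centralising_idempotent_if_loc_fdss_corner by blast
  have c_a: "centralising_idempotents \<Longrightarrow> loc_fdss scale UNIV"
    using loc_fdss_if_centralising_idempotents .
  from a_b b_c c_a show ?thesis
    unfolding centralising_idempotents_def by blast
qed

end
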